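(* Let $B=\bigoplus_{i\in\mathbb{Z}}\mathbb{Z}_2$ and $L_2=B\rtimes\langle t\rangle$ the lamplighter group, equipped with the word metric for the generating set $\{t,at\}$ (whose Cayley graph is the Diestel–Leader graph $DL(2,2)$). Let $\Psi:L_2\to L_2$ be a $(1,0)$-quasi-isometry (i.e. an isometry) that coarsely permutes the left cosets of $\langle t\rangle$, with induced permutation $\psi:B\to B$. Then $\psi$ is parallelogram preserving: for all $a,b,c,d\in B$ with $a+c=b+d$ we have $\psi(a)+\psi(c)=\psi(b)+\psi(d)$.
   Context: Elements of $L_2$ are $((x_i),k)$ with $((x_i),k)((y_i),\ell)=((x_i+y_{i-k}),k+\ell)$, $t=(0,1)$, $at=(e_0,1)$ where $e_0$ has a single $1$ at index $0$. $\Psi$ coarsely permutes the left cosets of $\langle t\rangle$ if there are a permutation $\sigma$ of these cosets and $C'\ge0$ with Hausdorff distance $d_{\mathcal H}(\Psi(g\langle t\rangle),\sigma(g\langle t\rangle))<C'$ for all $g$; identifying the coset $((x_i),k)\langle t\rangle$ with $(x_i)\in B$ gives $\psi$. *)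

theory Defs
  imports "HOL-Library.Extended_Real"
begin

text \<open>The group B = direct sum over Z of Z_2, represented by finite subsets of int
  (the support of a finitely supported 0/1 sequence); addition is symmetric difference.\<close>

definition B :: "int set set" where
  "B = {X. finite X}"

definition badd :: "int set \<Rightarrow> int set \<Rightarrow> int set" where
  "badd X Y = (X - Y) \<union> (Y - X)"

definition bshift :: "int \<Rightarrow> int set \<Rightarrow> int set" where
  "bshift k Y = (\<lambda>j. j + k) ` Y"

type_synonym lamp = "int set \<times> int"

definition L2 :: "lamp set" where
  "L2 = {(X, k). finite X}"

definition lmult :: "lamp \<Rightarrow> lamp \<Rightarrow> lamp" where
  "lmult g h = (badd (fst g) (bshift (snd g) (fst h)), snd g + snd h)"

definition linv :: "lamp \<Rightarrow> lamp" where
  "linv g = (bshift (- snd g) (fst g), - snd g)"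

definition gen_t :: lamp where "gen_t = ({}, 1)"
definition gen_at :: lamp where "gen_at = ({0}, 1)"

definition gens :: "lamp set" where
  "gens = {gen_t, gen_at, linv gen_t, linv gen_at}"

definition cayley_adj :: "lamp \<Rightarrow> lamp \<Rightarrow> bool" where
  "cayley_adj g h \<longleftrightarrow> g \<in> L2 \<and> (\<exists>s\<in>gens. h = lmult g s)"

definition word_dist :: "lamp \<Rightarrow> lamp \<Rightarrow> nat" where
  "word_dist g h = (LEAST n. (cayley_adj ^^ n) g h)"

definition setdist_pt :: "lamp \<Rightarrow> lamp set \<Rightarrow> ereal" where
  "setdist_pt a S = (INF b\<in>S. ereal (real (word_dist a b)))"

definition hausdist_L2 :: "lamp set \<Rightarrow> lamp set \<Rightarrow> ereal" where
  "hausdist_L2 S T = max (SUP a\<in>S. setdist_pt a T) (SUP b\<in>T. setdist_pt b S)"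

text \<open>Left coset ((x_i),k)<t> = {(x, k + n) | n}, identified with x \<in> B.\<close>
definition tcoset :: "int set \<Rightarrow> lamp set" where
  "tcoset X = {(X, n) | n. True}"

end

theory Submission
  imports Defs
begin

(* The word metric of L_2 is explicit: a path from (X, k) to (Y, l) must cross each level
   between k and l once, and each other level it has to reach (to toggle a lamp of X + Y or to
   get to the far endpoint) twice; greedy paths show that this count is the distance.

   Consequently an isometric line m |-> Psi (X, m) staying within distance K of the coset
   psi(X)<t> lies in that coset: if its point at parameter n had a lamp j differing from psi(X),
   then j is near the height of that point, while the points at parameters n - N and n + N have
   heights far from j on opposite sides and agree with psi(X) at j. Both legs through the middle
   point cross level j twice, the direct path only once, so the triangle inequality is strict.

   Hence Psi (X, m) = (psi X, h_X m) with h_X an isometry of Z. The adjacent points (X, j) and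
   (X + {j}, j + 1) go to adjacent points, which forces h_(X + {j}) = h_X and
   psi (X + {j}) = psi X + {g j} with g j = min (h_X j) (h_X (j + 1)). By induction
   psi X = psi {} + g(X) for an injective g, so psi is affine. *)

lemma mem_badd: "x \<in> badd X Y \<longleftrightarrow> (x \<in> X) \<noteq> (x \<in> Y)"
  by (auto simp: badd_def)

lemma finite_badd: "finite X \<Longrightarrow> finite Y \<Longrightarrow> finite (badd X Y)"
  by (simp add: badd_def)

lemma badd_left_cancel: "badd X (badd X Y) = Y"
  by (auto simp: badd_def)

lemma badd_assoc: "badd (badd X Y) Z = badd X (badd Y Z)"
  by (auto simp: badd_def)

lemma badd_badd_cancel_left: "badd (badd P X) (badd P Y) = badd X Y"
  by (auto simp: badd_def)

lemma badd_insert: "x \<notin> F \<Longrightarrow> insert x F = badd F {x}"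
  by (auto simp: badd_def)

lemma image_badd: "inj f \<Longrightarrow> f ` badd X Y = badd (f ` X) (f ` Y)"
  by (simp add: badd_def image_Un image_set_diff)

lemma badd_subset_singleton_iff: "badd X X' \<subseteq> {j} \<longleftrightarrow> X' = X \<or> X' = badd X {j}"
  by (auto simp: badd_def)

section \<open>The word metric of the lamplighter group\<close>

lemma cayley_adj_iff:
  "cayley_adj (X, k) (X', k') \<longleftrightarrow>
     finite X \<and> (k' = k + 1 \<or> k' = k - 1) \<and> badd X X' \<subseteq> {min k k'}"
  by (auto simp: badd_subset_singleton_iff cayley_adj_def gens_def gen_t_def gen_at_def
      linv_def lmult_def L2_def bshift_def badd_def add.commute)

lemma cayley_adj_finite: "cayley_adj u v \<Longrightarrow> finite (fst u) \<and> finite (fst v)"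
  by (cases u; cases v) (auto simp: cayley_adj_iff badd_subset_singleton_iff finite_badd)

lemma cayley_adj_distinct_lamps:
  assumes "cayley_adj (X, k) (X', k')" "X \<noteq> X'"
  shows "\<bar>k - k'\<bar> = 1 \<and> badd X X' = {min k k'}"
  using assms by (auto simp: cayley_adj_iff badd_subset_singleton_iff badd_def)

text \<open>Level \<open>j\<close> is the edge between heights \<open>j\<close> and \<open>j + 1\<close>; lamp \<open>x\<close> can only be
  toggled while crossing level \<open>x\<close>. A path from \<open>u\<close> to \<open>v\<close> crosses every \<open>crossed_level\<close>
  at least once if it lies between the heights and at least twice otherwise.\<close>

definition between_heights :: "lamp \<Rightarrow> lamp \<Rightarrow> int \<Rightarrow> bool" where
  "between_heights u v j \<longleftrightarrow> (snd u \<le> j) \<noteq> (snd v \<le> j)"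

definition crossed_level :: "lamp \<Rightarrow> lamp \<Rightarrow> int \<Rightarrow> bool" where
  "crossed_level u v j \<longleftrightarrow>
     (snd u \<le> j \<or> snd v \<le> j \<or> (\<exists>x\<in>badd (fst u) (fst v). x \<le> j)) \<and>
     (j < snd u \<or> j < snd v \<or> (\<exists>x\<in>badd (fst u) (fst v). j \<le> x))"

definition level_cost :: "lamp \<Rightarrow> lamp \<Rightarrow> int \<Rightarrow> nat" where
  "level_cost u v j =
     (if between_heights u v j then 1 else if crossed_level u v j then 2 else 0)"

definition lamp_dist :: "lamp \<Rightarrow> lamp \<Rightarrow> nat" where
  "lamp_dist u v = (\<Sum>j | crossed_level u v j. level_cost u v j)"

lemma between_heights_imp_crossed_level: "between_heights u v j \<Longrightarrow> crossed_level u v j"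
  by (auto simp: between_heights_def crossed_level_def)

lemma level_cost_eq_0_iff: "level_cost u v j = 0 \<longleftrightarrow> \<not> crossed_level u v j"
  using between_heights_imp_crossed_level by (auto simp: level_cost_def)

lemma level_cost_le_2: "level_cost u v j \<le> 2"
  by (simp add: level_cost_def)

lemma level_cost_self [simp]: "level_cost u u j = 0"
  by (auto simp: level_cost_def between_heights_def crossed_level_def badd_def)

lemma level_cost_commute: "level_cost u v j = level_cost v u j"
  by (auto simp: level_cost_def between_heights_def crossed_level_def badd_def)

lemma crossed_level_commute: "crossed_level u v j = crossed_level v u j"
  by (auto simp: crossed_level_def badd_def)

lemma level_cost_triangle: "level_cost u w j \<le> level_cost u v j + level_cost v w j"
  by (auto simp: level_cost_def between_heights_def crossed_level_def mem_badd)

lemma finite_crossed_levels: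
  assumes "finite (fst u)" "finite (fst v)"
  shows "finite {j. crossed_level u v j}"
proof -
  define S where "S = insert (snd u) (insert (snd v) (badd (fst u) (fst v)))"
  have "finite S"
    using assms by (simp add: S_def finite_badd)
  moreover have "{j. crossed_level u v j} \<subseteq> {Min S..Max S}"
  proof
    fix j assume "j \<in> {j. crossed_level u v j}"
    then have "\<exists>x\<in>S. x \<le> j" "\<exists>x\<in>S. j \<le> x"
      by (auto simp: crossed_level_def S_def intro: less_imp_le)
    with \<open>finite S\<close> show "j \<in> {Min S..Max S}"
      by (meson Max_ge Min_le atLeastAtMost_iff order_trans)
  qed
  ultimately show ?thesis
    using finite_subset by blast
qed

lemma lamp_dist_eq_sum:
  assumes "finite (fst u)" "finite (fst v)" "finite W" "{j. crossed_level u v j} \<subseteq> W"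
  shows "lamp_dist u v = (\<Sum>j\<in>W. level_cost u v j)"
  unfolding lamp_dist_def
  by (rule sum.mono_neutral_left) (use assms level_cost_eq_0_iff in auto)

lemma lamp_dist_self [simp]: "lamp_dist u u = 0"
  by (simp add: lamp_dist_def)

lemma lamp_dist_commute: "lamp_dist u v = lamp_dist v u"
  by (simp add: lamp_dist_def level_cost_commute crossed_level_commute)

lemma lamp_dist_triangle_gap:
  assumes "finite (fst u)" "finite (fst v)" "finite (fst w)"
  shows "lamp_dist u w + (level_cost u v j + level_cost v w j - level_cost u w j)
           \<le> lamp_dist u v + lamp_dist v w"
proof -
  define W where
    "W = insert j ({i. crossed_level u w i} \<union> {i. crossed_level u v i} \<union> {i. crossed_level v w i})"
  have W: "finite W" "j \<in> W"
    using finite_crossed_levels assms by (auto simp: W_def)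
  have sums: "lamp_dist u w = (\<Sum>i\<in>W. level_cost u w i)" "lamp_dist u v = (\<Sum>i\<in>W. level_cost u v i)"
    "lamp_dist v w = (\<Sum>i\<in>W. level_cost v w i)"
    by (rule lamp_dist_eq_sum; use assms W in \<open>auto simp: W_def\<close>)+
  have "(\<Sum>i\<in>W - {j}. level_cost u w i) \<le> (\<Sum>i\<in>W - {j}. level_cost u v i + level_cost v w i)"
    by (rule sum_mono) (rule level_cost_triangle)
  then show ?thesis
    using level_cost_triangle[of u w j v]
    by (simp add: sums sum.remove[OF W] sum.distrib)
qed

lemma lamp_dist_triangle:
  assumes "finite (fst u)" "finite (fst v)" "finite (fst w)"
  shows "lamp_dist u w \<le> lamp_dist u v + lamp_dist v w"
  using lamp_dist_triangle_gap[OF assms, of 0] by simp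

lemma lamp_dist_triangle_strict:
  assumes "finite (fst u)" "finite (fst v)" "finite (fst w)"
    and "between_heights u w j" "crossed_level u v j" "crossed_level v w j"
  shows "lamp_dist u w < lamp_dist u v + lamp_dist v w"
proof -
  have "level_cost u w j = 1" "level_cost u v j \<noteq> 0" "level_cost v w j \<noteq> 0"
    using assms(4-6) by (auto simp: level_cost_def level_cost_eq_0_iff)
  then show ?thesis
    using lamp_dist_triangle_gap[OF assms(1-3), of j] by simp
qed

lemma level_cost_change_other_level:
  assumes "k \<in> {j, j + 1}" "k' \<in> {j, j + 1}" "badd X X' \<subseteq> {j}" "i \<noteq> j"
  shows "level_cost (X, k) v i = level_cost (X', k') v i"
proof -
  have "x \<in> badd X (fst v) \<longleftrightarrow> x \<in> badd X' (fst v)" if "x \<noteq> j" for x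
    using assms(3) that by (auto simp: badd_def)
  then have "crossed_level (X, k) v i = crossed_level (X', k') v i"
    using assms(1,2,4) unfolding crossed_level_def
    by (smt (verit, best) fst_conv insert_iff singletonD snd_conv)
  moreover have "between_heights (X, k) v i = between_heights (X', k') v i"
    using assms by (auto simp: between_heights_def)
  ultimately show ?thesis
    by (simp add: level_cost_def)
qed

lemma lamp_dist_change_level:
  assumes "finite X" "finite X'" "finite (fst v)"
    and "k \<in> {j, j + 1}" "k' \<in> {j, j + 1}" "badd X X' \<subseteq> {j}"
  shows "lamp_dist (X, k) v + level_cost (X', k') v j = lamp_dist (X', k') v + level_cost (X, k) v j"
proof -
  define W where "W = insert j ({i. crossed_level (X, k) v i} \<union> {i. crossed_level (X', k') v i})"
  have W: "finite W" "j \<in> W"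
    using finite_crossed_levels assms(1-3) by (auto simp: W_def)
  have "lamp_dist (X, k) v = (\<Sum>i\<in>W. level_cost (X, k) v i)"
    "lamp_dist (X', k') v = (\<Sum>i\<in>W. level_cost (X', k') v i)"
    by (rule lamp_dist_eq_sum; use assms W in \<open>auto simp: W_def\<close>)+
  moreover have "(\<Sum>i\<in>W - {j}. level_cost (X, k) v i) = (\<Sum>i\<in>W - {j}. level_cost (X', k') v i)"
    by (rule sum.cong) (use level_cost_change_other_level[OF assms(4-6)] in auto)
  ultimately show ?thesis
    by (simp add: sum.remove[OF W])
qed

lemma lamp_dist_adjacent:
  assumes "cayley_adj u v"
  shows "lamp_dist u v = 1"
proof -
  obtain X k X' k' where uv: "u = (X, k)" "v = (X', k')"
    by fastforce
  define j where "j = min k k'"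
  have adj: "finite X" "finite X'" "k \<in> {j, j + 1}" "k' \<in> {j, j + 1}" "badd X X' \<subseteq> {j}"
    using assms cayley_adj_finite[OF assms] by (auto simp: uv cayley_adj_iff j_def)
  have "level_cost v u j = 1"
    using adj(3,4) assms by (auto simp: uv level_cost_def between_heights_def cayley_adj_iff)
  then show ?thesis
    using lamp_dist_change_level[OF adj(1,2), of u, OF _ adj(3-5)] adj(1)
    by (simp add: uv lamp_dist_commute)
qed

lemma lamp_dist_le_path_length:
  assumes "(cayley_adj ^^ n) u v" "finite (fst u)"
  shows "finite (fst v) \<and> lamp_dist u v \<le> n"
  using assms(1)
proof (induction n arbitrary: v)
  case 0
  then show ?case
    using assms(2) by simp
next
  case (Suc n)
  then obtain w where w: "(cayley_adj ^^ n) u w" "cayley_adj w v"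
    by auto
  with Suc.IH have "finite (fst w)" "lamp_dist u w \<le> n"
    by blast+
  with lamp_dist_triangle[of u w v] show ?case
    using assms(2) cayley_adj_finite[OF w(2)] lamp_dist_adjacent[OF w(2)] by simp
qed

lemma lamp_dist_step_down:
  assumes "finite X" "finite Y"
    and "k \<le> l \<and> (\<exists>x\<in>badd X Y. x < k) \<or> l < k \<and> (\<forall>x\<in>badd X Y. x < k)"
  shows "lamp_dist (badd X (badd X Y \<inter> {k - 1}), k - 1) (Y, l) + 1 = lamp_dist (X, k) (Y, l)"
proof -
  let ?X' = "badd X (badd X Y \<inter> {k - 1})"
  have "level_cost (X, k) (Y, l) (k - 1) = level_cost (?X', k - 1) (Y, l) (k - 1) + 1"
    using assms(3)
    by (auto simp: level_cost_def between_heights_def crossed_level_def mem_badd split: if_splits;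
        smt (verit) mem_badd)
  moreover have "badd X ?X' \<subseteq> {k - 1}"
    by (auto simp: badd_def)
  ultimately show ?thesis
    using lamp_dist_change_level[of X ?X' "(Y, l)" k "k - 1" "k - 1"] assms(1,2)
    by (simp add: finite_badd)
qed

lemma lamp_dist_step_up:
  assumes "finite X" "finite Y"
    and "l \<le> k \<and> (\<exists>x\<in>badd X Y. k \<le> x) \<or> k < l \<and> (\<forall>x\<in>badd X Y. k \<le> x)"
  shows "lamp_dist (badd X (badd X Y \<inter> {k}), k + 1) (Y, l) + 1 = lamp_dist (X, k) (Y, l)"
proof -
  let ?X' = "badd X (badd X Y \<inter> {k})"
  have "level_cost (X, k) (Y, l) k = level_cost (?X', k + 1) (Y, l) k + 1"
    using assms(3)
    by (auto simp: level_cost_def between_heights_def crossed_level_def mem_badd split: if_splits;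
        force simp: mem_badd)
  moreover have "badd X ?X' \<subseteq> {k}"
    by (auto simp: badd_def)
  ultimately show ?thesis
    using lamp_dist_change_level[of X ?X' "(Y, l)" k k "k + 1"] assms(1,2)
    by (simp add: finite_badd)
qed

lemma exists_closer_neighbour:
  assumes "finite (fst u)" "finite (fst v)" "u \<noteq> v"
  shows "\<exists>w. cayley_adj u w \<and> finite (fst w) \<and> lamp_dist w v + 1 = lamp_dist u v"
proof -
  obtain X k Y l where uv: "u = (X, k)" "v = (Y, l)"
    by fastforce
  have fin: "finite X" "finite Y"
    using assms by (simp_all add: uv)
  consider (down) "k \<le> l \<and> (\<exists>x\<in>badd X Y. x < k) \<or> l < k \<and> (\<forall>x\<in>badd X Y. x < k)"
    | (up) "l \<le> k \<and> (\<exists>x\<in>badd X Y. k \<le> x) \<or> k < l \<and> (\<forall>x\<in>badd X Y. k \<le> x)"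
  proof -
    have "badd X Y \<noteq> {} \<or> k \<noteq> l"
      using assms(3) by (auto simp: uv badd_def)
    then have "k \<le> l \<and> (\<exists>x\<in>badd X Y. x < k) \<or> l < k \<and> (\<forall>x\<in>badd X Y. x < k) \<or>
        l \<le> k \<and> (\<exists>x\<in>badd X Y. k \<le> x) \<or> k < l \<and> (\<forall>x\<in>badd X Y. k \<le> x)"
      by (cases "k \<le> l") (auto simp: not_less)
    with that show thesis
      by blast
  qed
  then show ?thesis
  proof cases
    case down
    let ?w = "(badd X (badd X Y \<inter> {k - 1}), k - 1)"
    have "cayley_adj u ?w" "finite (fst ?w)"
      using fin by (auto simp: uv cayley_adj_iff badd_left_cancel finite_badd)
    with lamp_dist_step_down[OF fin down] show ?thesis
      unfolding uv by blast
  next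
    case up
    let ?w = "(badd X (badd X Y \<inter> {k}), k + 1)"
    have "cayley_adj u ?w" "finite (fst ?w)"
      using fin by (auto simp: uv cayley_adj_iff badd_left_cancel finite_badd)
    with lamp_dist_step_up[OF fin up] show ?thesis
      unfolding uv by blast
  qed
qed

lemma cayley_path_of_lamp_dist:
  assumes "finite (fst u)" "finite (fst v)"
  shows "(cayley_adj ^^ lamp_dist u v) u v"
proof -
  have "(cayley_adj ^^ n) u v" if "finite (fst u)" "lamp_dist u v = n" for n u
    using that
  proof (induction n arbitrary: u)
    case 0
    show ?case
    proof (cases "u = v")
      case False
      then show ?thesis
        using exists_closer_neighbour[OF 0(1) assms(2)] 0(2) by auto
    qed simp
  next
    case (Suc n)
    then have "u \<noteq> v"
      by auto
    then obtain w where w: "cayley_adj u w" "finite (fst w)" "lamp_dist w v = n"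
      using exists_closer_neighbour[OF Suc.prems(1) assms(2)] Suc.prems(2) by auto
    then have "(cayley_adj ^^ n) w v"
      using Suc.IH by blast
    with w(1) show ?case
      by (rule relpowp_Suc_I2)
  qed
  with assms show ?thesis
    by blast
qed

lemma word_dist_eq_lamp_dist:
  assumes "finite (fst u)" "finite (fst v)"
  shows "word_dist u v = lamp_dist u v"
  unfolding word_dist_def
  by (rule Least_equality) (use assms cayley_path_of_lamp_dist lamp_dist_le_path_length in auto)

lemma cayley_adj_iff_lamp_dist_eq_1:
  assumes "finite (fst u)" "finite (fst v)"
  shows "cayley_adj u v \<longleftrightarrow> lamp_dist u v = 1"
  using lamp_dist_adjacent cayley_path_of_lamp_dist[OF assms] by (metis relpowp_1)

section \<open>Isometric lines near a coset\<close>

lemma lamp_dist_ge_card: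
  assumes "finite (fst u)" "finite (fst v)" "W \<subseteq> {j. crossed_level u v j}"
  shows "card W \<le> lamp_dist u v"
proof -
  have "finite W"
    using assms finite_crossed_levels finite_subset by blast
  have "card W = (\<Sum>j\<in>W. 1)"
    by simp
  also have "\<dots> \<le> (\<Sum>j\<in>W. level_cost u v j)"
    by (rule sum_mono) (use assms(3) level_cost_eq_0_iff in fastforce)
  also have "\<dots> \<le> lamp_dist u v"
    unfolding lamp_dist_def
    by (rule sum_mono2) (use assms finite_crossed_levels in auto)
  finally show ?thesis .
qed

lemma lamp_dist_ge_height:
  assumes "finite (fst u)" "finite (fst v)"
  shows "\<bar>snd u - snd v\<bar> \<le> int (lamp_dist u v)"
proof -
  have "{min (snd u) (snd v)..<max (snd u) (snd v)} \<subseteq> {j. crossed_level u v j}"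
    by (auto simp: crossed_level_def min_def max_def)
  from lamp_dist_ge_card[OF assms this] show ?thesis
    by (simp add: max_def min_def split: if_splits)
qed

lemma lamp_dist_ge_lamp:
  assumes "finite (fst u)" "finite (fst v)" "x \<in> badd (fst u) (fst v)"
  shows "\<bar>x - snd u\<bar> \<le> int (lamp_dist u v)"
proof -
  have "{min x (snd u)..<max x (snd u)} \<subseteq> {j. crossed_level u v j}"
    using assms(3) by (auto simp: crossed_level_def min_def max_def; meson less_imp_le)
  from lamp_dist_ge_card[OF assms(1,2) this] show ?thesis
    by (simp add: max_def min_def split: if_splits)
qed

lemma lamp_dist_same_lamps: "lamp_dist (X, k) (X, l) = nat \<bar>k - l\<bar>"
proof -
  have levels: "{j. crossed_level (X, k) (X, l) j} = {min k l..<max k l}"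
    by (auto simp: crossed_level_def badd_def)
  have "lamp_dist (X, k) (X, l) = (\<Sum>j\<in>{min k l..<max k l}. 1)"
    unfolding lamp_dist_def levels
    by (rule sum.cong) (auto simp: level_cost_def between_heights_def)
  then show ?thesis
    by (simp add: max_def min_def)
qed

lemma lamp_dist_le_window:
  assumes "finite (fst u)" "finite (fst v)" "\<And>j. crossed_level u v j \<Longrightarrow> lo \<le> j \<and> j \<le> hi"
  shows "lamp_dist u v \<le> 2 * nat (hi - lo + 1)"
proof -
  have "lamp_dist u v \<le> 2 * card {j. crossed_level u v j}"
    unfolding lamp_dist_def
    using sum_bounded_above[of "{j. crossed_level u v j}" "level_cost u v" 2] level_cost_le_2
    by (simp add: mult.commute)
  moreover have "card {j. crossed_level u v j} \<le> card {lo..hi}"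
    by (rule card_mono) (use assms in auto)
  ultimately show ?thesis
    by simp
qed

lemma lamp_dist_le_near_coset:
  assumes "finite X1" "finite X2" "0 \<le> K"
    and "\<forall>x\<in>badd X1 Y. \<bar>x - k1\<bar> \<le> K" "\<forall>x\<in>badd X2 Y. \<bar>x - k2\<bar> \<le> K"
  shows "int (lamp_dist (X1, k1) (X2, k2)) \<le> 2 * (\<bar>k1 - k2\<bar> + 2 * K + 1)"
proof -
  have "\<bar>x - k1\<bar> \<le> K \<or> \<bar>x - k2\<bar> \<le> K" if "x \<in> badd X1 X2" for x
    using that assms(4,5) by (auto simp: badd_def)
  then have "min k1 k2 - K \<le> j \<and> j \<le> max k1 k2 + K" if "crossed_level (X1, k1) (X2, k2) j" for j
    using that assms(3) unfolding crossed_level_def by fastforce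
  from lamp_dist_le_window[of "(X1, k1)" "(X2, k2)", OF _ _ this] assms(1-3) show ?thesis
    by (cases "k1 \<le> k2") (simp_all add: max_def min_def)
qed

lemma geodesic_midpoint_near_coset_in_coset:
  fixes K N :: int
  assumes fin: "finite (fst u)" "finite (fst v)" "finite (fst w)"
    and near: "\<forall>x\<in>badd (fst u) Y. \<bar>x - snd u\<bar> \<le> K" "\<forall>x\<in>badd (fst v) Y. \<bar>x - snd v\<bar> \<le> K"
      "\<forall>x\<in>badd (fst w) Y. \<bar>x - snd w\<bar> \<le> K"
    and geodesic: "int (lamp_dist u v) = N" "int (lamp_dist v w) = N" "int (lamp_dist u w) = 2 * N"
    and "8 * K + 4 < N"
  shows "fst v = Y"
proof (rule ccontr)
  assume "fst v \<noteq> Y"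
  then obtain j where j: "j \<in> badd (fst v) Y"
    by (auto simp: badd_def)
  then have "\<bar>j - snd v\<bar> \<le> K"
    using near(2) by blast
  then have "0 \<le> K"
    by linarith
  have "\<bar>snd u - snd v\<bar> \<le> N" "\<bar>snd v - snd w\<bar> \<le> N"
    using lamp_dist_ge_height[of u v] lamp_dist_ge_height[of v w] fin geodesic by simp_all
  moreover have "N \<le> 2 * (\<bar>snd u - snd v\<bar> + 2 * K + 1)" "N \<le> 2 * (\<bar>snd v - snd w\<bar> + 2 * K + 1)"
    "2 * N \<le> 2 * (\<bar>snd u - snd w\<bar> + 2 * K + 1)"
    using lamp_dist_le_near_coset[of "fst u" "fst v" K Y "snd u" "snd v"]
      lamp_dist_le_near_coset[of "fst v" "fst w" K Y "snd v" "snd w"]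
      lamp_dist_le_near_coset[of "fst u" "fst w" K Y "snd u" "snd w"]
      fin near geodesic \<open>0 \<le> K\<close> by simp_all
  \<comment> \<open>Since \<open>N > 8 K + 4\<close>, the height of \<open>v\<close> lies strictly between those of \<open>u\<close> and \<open>w\<close>,
    more than \<open>2 K\<close> away from both.\<close>
  ultimately have between: "snd u \<le> j \<and> j < snd w \<or> snd w \<le> j \<and> j < snd u"
    and far: "K < \<bar>j - snd u\<bar>" "K < \<bar>j - snd w\<bar>"
    using \<open>\<bar>j - snd v\<bar> \<le> K\<close> \<open>8 * K + 4 < N\<close> by (auto simp: abs_if split: if_splits)
  have "j \<notin> badd (fst u) Y" "j \<notin> badd (fst w) Y"
    using far near(1,3) by force+
  with j have "j \<in> badd (fst u) (fst v)" "j \<in> badd (fst v) (fst w)"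
    by (simp_all add: mem_badd)
  then have "crossed_level u v j" "crossed_level v w j"
    by (auto simp: crossed_level_def)
  moreover have "between_heights u w j"
    using between by (auto simp: between_heights_def)
  ultimately have "lamp_dist u w < lamp_dist u v + lamp_dist v w"
    using lamp_dist_triangle_strict fin by blast
  then show False
    using geodesic by linarith
qed

lemma isometric_line_near_coset_in_coset:
  fixes \<gamma> :: "int \<Rightarrow> lamp" and K :: nat
  assumes fin: "\<And>m. finite (fst (\<gamma> m))" "finite Y"
    and isometric: "\<And>m m'. lamp_dist (\<gamma> m) (\<gamma> m') = nat \<bar>m - m'\<bar>"
    and near: "\<And>m. \<exists>q. lamp_dist (\<gamma> m) (Y, q) \<le> K"
  shows "fst (\<gamma> n) = Y"
proof -
  have near_lamps: "\<forall>x\<in>badd (fst (\<gamma> m)) Y. \<bar>x - snd (\<gamma> m)\<bar> \<le> int K" for m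
  proof
    fix x assume "x \<in> badd (fst (\<gamma> m)) Y"
    moreover obtain q where "lamp_dist (\<gamma> m) (Y, q) \<le> K"
      using near by blast
    ultimately show "\<bar>x - snd (\<gamma> m)\<bar> \<le> int K"
      using lamp_dist_ge_lamp[of "\<gamma> m" "(Y, q)" x] fin by force
  qed
  define N where "N = 8 * int K + 5"
  show ?thesis
    by (rule geodesic_midpoint_near_coset_in_coset[of "\<gamma> (n - N)" "\<gamma> n" "\<gamma> (n + N)" Y "int K" N])
      (use fin near_lamps isometric in \<open>simp_all add: N_def\<close>)
qed

section \<open>Isometries preserving the cosets\<close>

lemma int_isometry_cases:
  fixes f :: "int \<Rightarrow> int"
  assumes "\<And>n m. \<bar>f n - f m\<bar> = \<bar>n - m\<bar>"
  shows "\<exists>c. f = (\<lambda>n. c + n) \<or> f = (\<lambda>n. c - n)"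
proof -
  consider "f 1 = f 0 + 1" | "f 1 = f 0 - 1"
    using assms[of 1 0] by linarith
  then show ?thesis
  proof cases
    case 1
    then have "f n = f 0 + n" for n
      using assms[of n 0] assms[of n 1] by linarith
    then show ?thesis
      by blast
  next
    case 2
    then have "f n = f 0 - n" for n
      using assms[of n 0] assms[of n 1] by linarith
    then show ?thesis
      by blast
  qed
qed

lemma int_isometry_eqI:
  fixes f g :: "int \<Rightarrow> int"
  assumes "\<And>n m. \<bar>f n - f m\<bar> = \<bar>n - m\<bar>" "\<And>n m. \<bar>g n - g m\<bar> = \<bar>n - m\<bar>"
    and "f j = g j" "f (j + 1) = g (j + 1)"
  shows "f = g"
proof -
  obtain c d where "f = (\<lambda>n. c + n) \<or> f = (\<lambda>n. c - n)" "g = (\<lambda>n. d + n) \<or> g = (\<lambda>n. d - n)"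
    using int_isometry_cases assms(1,2) by metis
  with assms(3,4) show ?thesis
    by auto
qed

locale lamp_coset_isometry =
  fixes \<Psi> :: "lamp \<Rightarrow> lamp" and \<phi> :: "int set \<Rightarrow> int set"
  assumes lamp_dist_image:
      "finite X \<Longrightarrow> finite Y \<Longrightarrow> lamp_dist (\<Psi> (X, n)) (\<Psi> (Y, m)) = lamp_dist (X, n) (Y, m)"
    and finite_image: "finite X \<Longrightarrow> finite (\<phi> X)"
    and inj_on_finite: "inj_on \<phi> {X. finite X}"
    and fst_image: "finite X \<Longrightarrow> fst (\<Psi> (X, n)) = \<phi> X"
begin

definition height :: "int set \<Rightarrow> int \<Rightarrow> int" where
  "height X n = snd (\<Psi> (X, n))"

lemma image_eq: "finite X \<Longrightarrow> \<Psi> (X, n) = (\<phi> X, height X n)"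
  by (metis fst_image height_def prod.collapse)

lemma height_isometry: "finite X \<Longrightarrow> \<bar>height X n - height X m\<bar> = \<bar>n - m\<bar>"
  using lamp_dist_image[of X X n m] by (simp add: image_eq lamp_dist_same_lamps)

lemma image_adjacent:
  assumes "finite X" "finite Y" "cayley_adj (X, n) (Y, m)"
  shows "cayley_adj (\<phi> X, height X n) (\<phi> Y, height Y m)"
  using assms lamp_dist_image[of X Y n m] finite_image
  by (simp add: image_eq cayley_adj_iff_lamp_dist_eq_1)

lemma toggle_lamp:
  assumes "finite X"
  shows "height (badd X {j}) = height X \<and>
    \<phi> (badd X {j}) = badd (\<phi> X) {min (height X j) (height X (j + 1))}"
proof -
  define Y where "Y = badd X {j}"
  have "finite Y" "X \<noteq> Y"
    using assms by (auto simp: Y_def finite_badd badd_def)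
  then have "\<phi> X \<noteq> \<phi> Y"
    using assms inj_on_finite by (auto dest: inj_onD)
  moreover have "cayley_adj (X, j) (Y, j + 1)" "cayley_adj (X, j + 1) (Y, j)"
    using assms by (auto simp: cayley_adj_iff Y_def badd_left_cancel)
  ultimately have "\<bar>height X j - height Y (j + 1)\<bar> = 1" "\<bar>height X (j + 1) - height Y j\<bar> = 1"
    "badd (\<phi> X) (\<phi> Y) = {min (height X j) (height Y (j + 1))}"
    "badd (\<phi> X) (\<phi> Y) = {min (height X (j + 1)) (height Y j)}"
    using cayley_adj_distinct_lamps image_adjacent assms \<open>finite Y\<close> by blast+
  moreover have "\<bar>height X j - height X (j + 1)\<bar> = 1"
    using height_isometry[OF assms] by simp
  ultimately have "height X j = height Y j" "height X (j + 1) = height Y (j + 1)"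
    and \<phi>Y: "badd (\<phi> X) (\<phi> Y) = {min (height X j) (height X (j + 1))}"
    by (auto simp: abs_if min_def split: if_splits)
  then have "height X = height Y"
    using int_isometry_eqI height_isometry assms \<open>finite Y\<close> by blast
  moreover have "\<phi> Y = badd (\<phi> X) {min (height X j) (height X (j + 1))}"
    by (simp flip: \<phi>Y add: badd_left_cancel)
  ultimately show ?thesis
    by (simp add: Y_def)
qed

lemma height_eq_height_empty: "finite X \<Longrightarrow> height X = height {}"
proof (induction X rule: finite_induct)
  case (insert x F)
  then show ?case
    by (simp add: badd_insert[OF insert(2)] toggle_lamp)
qed simp

definition lamp_map :: "int \<Rightarrow> int" where
  "lamp_map j = min (height {} j) (height {} (j + 1))"

lemma inj_lamp_map: "inj lamp_map"
proof -
  obtain c where "height {} = (\<lambda>n. c + n) \<or> height {} = (\<lambda>n. c - n)"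
    using int_isometry_cases height_isometry by blast
  then have "lamp_map = (\<lambda>j. c + j) \<or> lamp_map = (\<lambda>j. c - j - 1)"
    by (auto simp: lamp_map_def fun_eq_iff)
  then show ?thesis
    by (auto intro: injI)
qed

lemma image_eq_translate: "finite X \<Longrightarrow> \<phi> X = badd (\<phi> {}) (lamp_map ` X)"
proof (induction X rule: finite_induct)
  case empty
  then show ?case
    by (simp add: badd_def)
next
  case (insert x F)
  have "\<phi> (insert x F) = badd (\<phi> F) {lamp_map x}"
    using toggle_lamp[OF insert(1)] height_eq_height_empty[OF insert(1)]
    by (simp add: badd_insert[OF insert(2)] lamp_map_def)
  also have "\<dots> = badd (\<phi> {}) (badd (lamp_map ` F) {lamp_map x})"
    by (simp add: insert.IH badd_assoc)
  also have "badd (lamp_map ` F) {lamp_map x} = lamp_map ` insert x F"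
    using insert(2) inj_lamp_map by (auto simp: badd_def dest: injD)
  finally show ?case .
qed

lemma badd_image: "finite X \<Longrightarrow> finite Y \<Longrightarrow> badd (\<phi> X) (\<phi> Y) = lamp_map ` badd X Y"
  by (metis image_eq_translate badd_badd_cancel_left image_badd[OF inj_lamp_map])

end

lemma finite_fst_image_L2:
  assumes "\<Psi> ` L2 \<subseteq> L2" "finite X"
  shows "finite (fst (\<Psi> (X, n)))"
proof -
  have "(X, n) \<in> L2"
    using assms(2) by (simp add: L2_def)
  with assms(1) have "\<Psi> (X, n) \<in> L2"
    by blast
  then show ?thesis
    by (auto simp: L2_def)
qed

lemma lamp_dist_image_eq:
  assumes "\<Psi> ` L2 \<subseteq> L2" "\<forall>g\<in>L2. \<forall>h\<in>L2. word_dist (\<Psi> g) (\<Psi> h) = word_dist g h"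
    and "finite X" "finite Y"
  shows "lamp_dist (\<Psi> (X, n)) (\<Psi> (Y, m)) = lamp_dist (X, n) (Y, m)"
proof -
  have "word_dist (\<Psi> (X, n)) (\<Psi> (Y, m)) = word_dist (X, n) (Y, m)"
    using assms(2-4) by (simp add: L2_def)
  then show ?thesis
    using assms finite_fst_image_L2 by (simp add: word_dist_eq_lamp_dist)
qed

lemma near_coset_if_hausdist_L2_lt:
  assumes "hausdist_L2 S (tcoset Y) < ereal C" "u \<in> S" "finite (fst u)" "finite Y"
  shows "\<exists>q. lamp_dist u (Y, q) \<le> nat \<lceil>C\<rceil>"
proof -
  have "setdist_pt u (tcoset Y) < ereal C"
    using assms(1,2) unfolding hausdist_L2_def
    by (meson SUP_upper max.strict_boundedE order.strict_trans1)
  then obtain q where "real (word_dist u (Y, q)) < C"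
    unfolding setdist_pt_def by (auto simp: INF_less_iff tcoset_def)
  moreover have "word_dist u (Y, q) = lamp_dist u (Y, q)"
    using assms(3,4) by (simp add: word_dist_eq_lamp_dist)
  ultimately have "lamp_dist u (Y, q) \<le> nat \<lceil>C\<rceil>"
    by linarith
  then show ?thesis ..
qed

theorem proposition4p2:
  fixes \<Psi> :: "lamp \<Rightarrow> lamp" and \<psi> :: "int set \<Rightarrow> int set"
  assumes maps: "\<Psi> ` L2 \<subseteq> L2"
    and isom: "\<forall>g\<in>L2. \<forall>h\<in>L2. word_dist (\<Psi> g) (\<Psi> h) = word_dist g h"
    and onto: "\<forall>h\<in>L2. \<exists>g\<in>L2. word_dist (\<Psi> g) h = 0"
    and perm: "bij_betw \<psi> B B"
    and coarse: "\<exists>C'::real. C' \<ge> 0 \<and>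
        (\<forall>X\<in>B. hausdist_L2 (\<Psi> ` tcoset X) (tcoset (\<psi> X)) < ereal C')"
  shows "\<forall>a\<in>B. \<forall>b\<in>B. \<forall>c\<in>B. \<forall>d\<in>B.
           badd a c = badd b d \<longrightarrow> badd (\<psi> a) (\<psi> c) = badd (\<psi> b) (\<psi> d)"
proof -
  obtain C :: real where C: "\<forall>X\<in>B. hausdist_L2 (\<Psi> ` tcoset X) (tcoset (\<psi> X)) < ereal C"
    using coarse by blast
  have fin: "finite (fst (\<Psi> (X, n)))" and fin_\<psi>: "finite (\<psi> X)" if "finite X" for X n
    using finite_fst_image_L2[OF maps that] perm that by (auto simp: B_def bij_betw_def)
  have near: "\<exists>q. lamp_dist (\<Psi> (X, m)) (\<psi> X, q) \<le> nat \<lceil>C\<rceil>" if "finite X" for X m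
    using near_coset_if_hausdist_L2_lt[of "\<Psi> ` tcoset X"] C fin fin_\<psi> that
    by (simp add: B_def tcoset_def)
  interpret lamp_coset_isometry \<Psi> \<psi>
  proof
    show "fst (\<Psi> (X, n)) = \<psi> X" if "finite X" for X n
      by (rule isometric_line_near_coset_in_coset[where \<gamma> = "\<lambda>m. \<Psi> (X, m)"])
        (use that fin fin_\<psi> near lamp_dist_image_eq[OF maps isom] lamp_dist_same_lamps in auto)
    show "inj_on \<psi> {X. finite X}"
      using perm by (simp add: bij_betw_def B_def)
  qed (use lamp_dist_image_eq[OF maps isom] fin_\<psi> in auto)
  show ?thesis
    using badd_image by (simp add: B_def)
qed

end
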